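(* Let $\delta,\lambda>0$ and let $S$ be the inverse Gaussian subordinator with Laplace exponent $\phi(s)=\delta\left(\sqrt{2s+\lambda^2}-\lambda\right)$, i.e. $\mathbb{E}[e^{-sS(t)}]=e^{-t\phi(s)}$. Let $u$ be the potential density of $S$. Then \begin{enumerate} \item $u(x)\sim \dfrac{1}{\delta\sqrt{2\pi x}}$ as $x\to 0^+$; \item $u(x)\sim \dfrac{\lambda}{\delta}$ as $x\to\infty$. \end{enumerate}
   Context: The potential measure of a subordinator $S$ is $U(A)=\mathbb{E}\left[\int_0^\infty \mathbf{1}_{\{S(t)\in A\}}\,dt\right]$ for Borel $A\subset(0,\infty)$; its density $u$ (potential density) satisfies $\int_0^\infty e^{-sx}u(x)\,dx=1/\phi(s)$. $f\sim g$ means $f/g\to1$. *)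

theory Defs
  imports "HOL-Probability.Probability" "HOL-Library.Landau_Symbols"
begin

definition ig_exponent :: "real \<Rightarrow> real \<Rightarrow> real \<Rightarrow> real" where
  "ig_exponent \<delta> lam s = \<delta> * (sqrt (2 * s + lam\<^sup>2) - lam)"

definition potential_measure :: "'a measure \<Rightarrow> (real \<Rightarrow> 'a \<Rightarrow> real) \<Rightarrow> real set \<Rightarrow> ennreal" where
  "potential_measure M S A =
     (\<integral>\<^sup>+ \<omega>. (\<integral>\<^sup>+ t\<in>{0..}. indicator A (S t \<omega>) \<partial>lborel) \<partial>M)"

end

(*
  With r = sqrt (2 s + lam^2) the reciprocal of the Laplace exponent splits as
    1 / phi(s) = (r + lam) / (2 delta s) = (1/r + lam/(2s) + lam^2/(2 s r)) / delta,
  and each summand is an explicit Laplace transform: 1/r that of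
  g(x) = exp(-lam^2 x / 2) / sqrt(2 pi x), 1/s that of the constant 1, and 1/(s r)
  that of G(x) = int_0^x g.  On the other hand Tonelli and S t > 0 a.s. show that the
  potential density u also has Laplace transform 1/phi.  Laplace transforms determine
  continuous functions (Stone-Weierstrass in the variable exp(-x)), so
  u = (g + lam/2 + lam^2/2 G) / delta on (0, oo).  Near 0 the term g dominates; at
  infinity g -> 0 and G -> 1/lam, whence u -> lam/delta.
*)
theory Submission
  imports Defs "HOL-Real_Asymp.Real_Asymp"
begin

text \<open>Being an \<open>ennreal\<close>-valued integral, this is only meaningful for \<open>f\<close> nonnegative on \<open>(0, \<infinity>)\<close>.\<close>
definition laplace_transform :: "(real \<Rightarrow> real) \<Rightarrow> real \<Rightarrow> ennreal" where
  "laplace_transform f s = (\<integral>\<^sup>+ x. indicator {0<..} x * ennreal (exp (- s * x) * f x) \<partial>lborel)"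

lemma laplace_transform_shift:
  "laplace_transform (\<lambda>x. exp (- a * x) * f x) s = laplace_transform f (s + a)"
proof -
  have "exp (- (s + a) * x) = exp (- s * x) * exp (- a * x)" for x
    by (simp add: exp_add[symmetric] algebra_simps)
  then show ?thesis
    unfolding laplace_transform_def by (simp add: mult.assoc)
qed

lemma laplace_transform_cmult:
  assumes "c \<ge> 0" and [measurable]: "f \<in> borel_measurable borel"
  shows "laplace_transform (\<lambda>x. c * f x) s = ennreal c * laplace_transform f s"
  unfolding laplace_transform_def
  by (subst nn_integral_cmult[symmetric])
     (use assms in \<open>auto intro!: nn_integral_cong simp: ennreal_mult' mult_ac\<close>)

lemma laplace_transform_add:
  assumes [measurable]: "f \<in> borel_measurable borel" "g \<in> borel_measurable borel"
    and "\<And>x. x > 0 \<Longrightarrow> f x \<ge> 0" "\<And>x. x > 0 \<Longrightarrow> g x \<ge> 0"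
  shows "laplace_transform (\<lambda>x. f x + g x) s = laplace_transform f s + laplace_transform g s"
  unfolding laplace_transform_def
  by (subst nn_integral_add[symmetric])
     (use assms in \<open>auto intro!: nn_integral_cong simp: distrib_left indicator_def\<close>)

lemma laplace_transform_powr:
  assumes c: "c > 0" and p: "p > 0"
  shows "laplace_transform (\<lambda>x. x powr (p - 1)) c = ennreal (Gamma p / c powr p)"
proof -
  define f where "f t = indicator {0..} t * ennreal (t powr (p - 1) / exp t)" for t :: real
  have [measurable]: "f \<in> borel_measurable borel"
    unfolding f_def by measurable
  have "ennreal (Gamma p) = (\<integral>\<^sup>+ t. f t \<partial>lborel)"
    using nn_integral_has_integral_lebesgue'[OF _ Gamma_integral_real[OF p]]
    by (simp add: f_def mult.commute)
  also have "\<dots> = ennreal c * (\<integral>\<^sup>+ t. f (0 + c * t) \<partial>lborel)"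
    using c by (subst nn_integral_real_affine[where c = c and t = 0]) auto
  also have "(\<lambda>t. f (0 + c * t)) =
      (\<lambda>t. ennreal (c powr (p - 1)) * (indicator {0<..} t * ennreal (exp (- c * t) * t powr (p - 1))))"
  proof
    fix t :: real
    show "f (0 + c * t) =
        ennreal (c powr (p - 1)) * (indicator {0<..} t * ennreal (exp (- c * t) * t powr (p - 1)))"
      using c by (cases t "0 :: real" rule: linorder_cases)
        (auto simp: f_def powr_mult ennreal_mult[symmetric] exp_minus field_simps zero_le_mult_iff)
  qed
  also have "ennreal c * (\<integral>\<^sup>+ t. ennreal (c powr (p - 1)) *
        (indicator {0<..} t * ennreal (exp (- c * t) * t powr (p - 1))) \<partial>lborel)
      = ennreal (c powr p) * laplace_transform (\<lambda>x. x powr (p - 1)) c"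
    using c by (subst nn_integral_cmult)
      (auto simp: laplace_transform_def mult.assoc[symmetric] ennreal_mult[symmetric] powr_diff)
  finally have Gamma_eq: "ennreal (Gamma p) = ennreal (c powr p) * laplace_transform (\<lambda>x. x powr (p - 1)) c" .
  have "ennreal (Gamma p / c powr p) = ennreal (Gamma p) / ennreal (c powr p)"
    using c Gamma_real_pos[OF p] by (simp add: divide_ennreal)
  also have "\<dots> = laplace_transform (\<lambda>x. x powr (p - 1)) c"
    unfolding Gamma_eq using c by (subst mult.commute) (simp add: ennreal_mult_divide_eq)
  finally show ?thesis ..
qed

lemma laplace_transform_const_1:
  assumes "c > 0"
  shows "laplace_transform (\<lambda>_. 1) c = ennreal (1 / c)"
proof -
  have "laplace_transform (\<lambda>_. 1) c = laplace_transform (\<lambda>x. x powr (1 - 1)) c"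
    unfolding laplace_transform_def by (intro nn_integral_cong) (simp add: indicator_def)
  then show ?thesis
    using laplace_transform_powr[OF assms, of 1] assms by simp
qed

lemma nn_integral_exp_Ici:
  assumes c: "c > 0"
  shows "(\<integral>\<^sup>+ t. indicator {y..} t * ennreal (exp (- c * t)) \<partial>lborel) = ennreal (exp (- c * y) / c)"
proof -
  define f where "f = (\<lambda>t. indicator {y..} t * ennreal (exp (- c * t)))"
  have [measurable]: "f \<in> borel_measurable borel"
    unfolding f_def by measurable
  have "(\<integral>\<^sup>+ t. f t \<partial>lborel) = (\<integral>\<^sup>+ t. f (y + 1 * t) \<partial>lborel)"
    by (subst nn_integral_real_affine[where c = 1]) auto
  also have "\<dots> = (\<integral>\<^sup>+ t. ennreal (exp (- c * y)) * (indicator {0<..} t * ennreal (exp (- c * t) * 1)) \<partial>lborel)"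
    using AE_lborel_singleton[of 0]
    by (intro nn_integral_cong_AE, eventually_elim)
       (auto simp: f_def indicator_def ennreal_mult[symmetric] algebra_simps exp_add[symmetric])
  also have "\<dots> = ennreal (exp (- c * y)) * ennreal (1 / c)"
    using laplace_transform_const_1[OF c] by (subst nn_integral_cmult) (auto simp: laplace_transform_def)
  also have "\<dots> = ennreal (exp (- c * y) / c)"
    using c by (subst ennreal_mult[symmetric]) auto
  finally show ?thesis
    unfolding f_def .
qed

lemma integrable_mult_bounded_of_exp:
  fixes h q :: "real \<Rightarrow> real"
  assumes h: "integrable lborel h" and supp: "\<And>x. x < 0 \<Longrightarrow> h x = 0"
    and [measurable]: "q \<in> borel_measurable borel" and q: "\<And>y. y \<in> {0..1} \<Longrightarrow> \<bar>q y\<bar> \<le> B"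
  shows "integrable lborel (\<lambda>x. h x * q (exp (- x)))"
proof (rule Bochner_Integration.integrable_bound[OF integrable_mult_right[OF h, of B]])
  have [measurable]: "h \<in> borel_measurable borel"
    using borel_measurable_integrable[OF h] by simp
  show "(\<lambda>x. h x * q (exp (- x))) \<in> borel_measurable lborel"
    by measurable
  have "\<bar>h x * q (exp (- x))\<bar> \<le> \<bar>B * h x\<bar>" for x
  proof (cases "x < 0")
    case False
    then have "\<bar>q (exp (- x))\<bar> \<le> \<bar>B\<bar>"
      using q[of "exp (- x)"] by auto
    then show ?thesis
      by (simp add: abs_mult mult.commute[of "\<bar>B\<bar>"] mult_left_mono)
  qed (simp add: supp)
  then show "AE x in lborel. norm (h x * q (exp (- x))) \<le> norm (B * h x)"
    by simp
qed

lemma integral_exp_moments_zero_imp_abs_integral_le: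
  fixes h F :: "real \<Rightarrow> real"
  assumes h: "integrable lborel h" and supp: "\<And>x. x < 0 \<Longrightarrow> h x = 0"
    and moments: "\<And>k::nat. (\<integral>x. h x * exp (- x) ^ k \<partial>lborel) = 0"
    and F: "continuous_on UNIV F" and e: "e > 0"
  shows "\<bar>\<integral>x. h x * F (exp (- x)) \<partial>lborel\<bar> \<le> e * (\<integral>x. \<bar>h x\<bar> \<partial>lborel)"
proof -
  obtain p where "polynomial_function p" and close: "\<And>y. y \<in> {0..1} \<Longrightarrow> \<bar>F y - p y\<bar> < e"
    using Stone_Weierstrass_polynomial_function[of "{0..1::real}" F e] continuous_on_subset[OF F] e
    by auto
  then obtain a n where p: "p = (\<lambda>y. \<Sum>i\<le>n. a i * y ^ i)"
    using real_polynomial_function_iff_sum real_polynomial_function_eq by metis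
  have [measurable]: "F \<in> borel_measurable borel" "p \<in> borel_measurable borel"
    using F by (auto simp: p intro: borel_measurable_continuous_onI)
  have "integrable lborel (\<lambda>x. h x * exp (- x) ^ k)" for k
    using h supp by (rule integrable_mult_bounded_of_exp[of _ "\<lambda>y. y ^ k" 1]) (auto intro: power_le_one)
  moreover have "h x * p (exp (- x)) = (\<Sum>i\<le>n. a i * (h x * exp (- x) ^ i))" for x
    by (simp add: p sum_distrib_left mult_ac)
  ultimately have hp_integrable: "integrable lborel (\<lambda>x. h x * p (exp (- x)))"
    and hp_zero: "(\<integral>x. h x * p (exp (- x)) \<partial>lborel) = 0"
    using moments by simp_all
  have diff_integrable: "integrable lborel (\<lambda>x. h x * (F (exp (- x)) - p (exp (- x))))"
    using h supp by (rule integrable_mult_bounded_of_exp[of _ "\<lambda>y. F y - p y" e])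
      (use close in \<open>auto simp: less_imp_le\<close>)
  have "(\<integral>x. h x * F (exp (- x)) \<partial>lborel) = (\<integral>x. h x * (F (exp (- x)) - p (exp (- x))) \<partial>lborel)"
    using Bochner_Integration.integral_add[OF diff_integrable hp_integrable] hp_zero
    by (simp add: algebra_simps)
  also have "\<bar>\<dots>\<bar> \<le> (\<integral>x. e * \<bar>h x\<bar> \<partial>lborel)"
  proof (rule integral_abs_bound_integral[OF diff_integrable])
    show "integrable lborel (\<lambda>x. e * \<bar>h x\<bar>)"
      using h by simp
    show "\<bar>h x * (F (exp (- x)) - p (exp (- x)))\<bar> \<le> e * \<bar>h x\<bar>" for x
      using close[of "exp (- x)"] supp[of x]
      by (cases "x < 0") (auto simp: abs_mult mult.commute[of e] intro!: mult_left_mono)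
  qed
  finally show ?thesis
    by simp
qed

lemma integral_exp_moments_zero_imp_integral_zero:
  fixes h F :: "real \<Rightarrow> real"
  assumes "integrable lborel h" and "\<And>x. x < 0 \<Longrightarrow> h x = 0"
    and "\<And>k::nat. (\<integral>x. h x * exp (- x) ^ k \<partial>lborel) = 0"
    and "continuous_on UNIV F"
  shows "(\<integral>x. h x * F (exp (- x)) \<partial>lborel) = 0"
proof -
  define C where "C = (\<integral>x. \<bar>h x\<bar> \<partial>lborel)"
  have "C \<ge> 0"
    by (simp add: C_def)
  have "\<bar>\<integral>x. h x * F (exp (- x)) \<partial>lborel\<bar> \<le> 0 + e" if "e > 0" for e
  proof -
    have "e / (C + 1) > 0"
      using \<open>e > 0\<close> \<open>C \<ge> 0\<close> by simp
    from integral_exp_moments_zero_imp_abs_integral_le[OF assms this]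
    have "\<bar>\<integral>x. h x * F (exp (- x)) \<partial>lborel\<bar> \<le> e / (C + 1) * C"
      by (simp add: C_def)
    also have "\<dots> \<le> e"
      using \<open>e > 0\<close> \<open>C \<ge> 0\<close> by (simp add: field_simps)
    finally show ?thesis
      by simp
  qed
  then have "\<bar>\<integral>x. h x * F (exp (- x)) \<partial>lborel\<bar> \<le> 0"
    by (rule field_le_epsilon)
  then show ?thesis
    by simp
qed

lemma integral_pos_if_ge_on_interval:
  fixes g :: "real \<Rightarrow> real"
  assumes "integrable lborel g" and "\<And>x. g x \<ge> 0"
    and "a < b" and "K > 0" and "\<And>x. x \<in> {a..b} \<Longrightarrow> g x \<ge> K"
  shows "(\<integral>x. g x \<partial>lborel) > 0"
proof -
  have "0 < (b - a) * K"
    using assms by simp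
  also have "\<dots> = (\<integral>x. indicator {a..b} x * K \<partial>lborel)"
    using \<open>a < b\<close> by simp
  also have "\<dots> \<le> (\<integral>x. g x \<partial>lborel)"
  proof (rule integral_mono[OF _ assms(1)])
    show "integrable lborel (\<lambda>x. indicator {a..b} x * K)"
      using \<open>a < b\<close> by (intro integrable_mult_left integrable_real_indicator) (auto simp: emeasure_lborel_Icc_eq)
    show "indicator {a..b} x * K \<le> g x" for x
      using assms(2,5)[of x] by (cases "x \<in> {a..b}") auto
  qed
  finally show ?thesis .
qed

lemma exists_tent_with_positive_integral:
  fixes w :: "real \<Rightarrow> real"
  assumes w: "continuous_on {0<..} w" and x0: "x0 > 0" and pos: "w x0 > 0"
    and int: "integrable lborel (\<lambda>x. indicator {0<..} x * exp (- x) * w x)"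
  obtains r where "r > 0"
    and "(\<integral>x. indicator {0<..} x * exp (- x) * w x * max 0 (r - \<bar>x - x0\<bar>) \<partial>lborel) > 0"
proof -
  define c where "c = w x0 / 2"
  have c: "0 < c" "c < w x0"
    using pos by (auto simp: c_def)
  have "isCont w x0"
    using w x0 by (simp add: continuous_on_eq_continuous_at)
  then have "eventually (\<lambda>x. w x > c) (at x0)"
    using c by (metis isCont_def order_tendstoD(1))
  then obtain d where d: "d > 0" "\<And>x. x \<noteq> x0 \<Longrightarrow> dist x x0 < d \<Longrightarrow> w x > c"
    unfolding eventually_at by blast
  define r where "r = min d (x0 / 2)"
  have r: "0 < r" "r < x0"
    using d x0 by (auto simp: r_def)
  have w_gt: "w x > c" if "\<bar>x - x0\<bar> < r" for x
    using d c that by (cases "x = x0") (auto simp: r_def dist_real_def)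
  define g where "g x = indicator {0<..} x * exp (- x) * w x * max 0 (r - \<bar>x - x0\<bar>)" for x
  have "integrable lborel g"
  proof (rule Bochner_Integration.integrable_bound[OF integrable_mult_right[OF integrable_abs[OF int], of r]])
    show "g \<in> borel_measurable lborel"
      using borel_measurable_integrable[OF int] by (simp add: g_def[abs_def])
    show "AE x in lborel. norm (g x) \<le> norm (r * \<bar>indicator {0<..} x * exp (- x) * w x\<bar>)"
      using r by (intro AE_I2) (auto simp: g_def abs_mult mult.commute[of r] intro!: mult_left_mono)
  qed
  moreover have "g x \<ge> 0" for x
    using w_gt[of x] c by (cases "\<bar>x - x0\<bar> < r") (auto simp: g_def)
  moreover have "g x \<ge> exp (- (x0 + r)) * c * (r / 2)" if "x \<in> {x0 - r / 2 .. x0 + r / 2}" for x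
  proof -
    have x: "x > 0" "x \<le> x0 + r" "\<bar>x - x0\<bar> < r" "r / 2 \<le> r - \<bar>x - x0\<bar>"
      using that r by (auto simp: abs_if)
    then have "exp (- (x0 + r)) * c * (r / 2) \<le> exp (- x) * w x * (r - \<bar>x - x0\<bar>)"
      using w_gt[of x] c r by (intro mult_mono) auto
    then show ?thesis
      using x by (simp add: g_def)
  qed
  ultimately have "(\<integral>x. g x \<partial>lborel) > 0"
    using r c
    by (intro integral_pos_if_ge_on_interval[where a = "x0 - r / 2" and b = "x0 + r / 2"
          and K = "exp (- (x0 + r)) * c * (r / 2)"]) auto
  then show ?thesis
    using that[OF \<open>r > 0\<close>] by (simp add: g_def)
qed

lemma continuous_tent_of_exp:
  obtains F :: "real \<Rightarrow> real" where "continuous_on UNIV F"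
    and "\<And>x. x > 0 \<Longrightarrow> F (exp (- x)) = max 0 (r - \<bar>x - x0\<bar>)"
proof
  define c0 where "c0 = exp (- (x0 + r))"
  have "c0 > 0"
    by (simp add: c0_def)
  then show "continuous_on UNIV (\<lambda>y. max 0 (r - \<bar>- ln (max y c0) - x0\<bar>))"
    by (intro continuous_intros) (auto simp: max_def)
  \<comment> \<open>the tent vanishes beyond \<open>x0 + r\<close>, so cutting \<open>exp (- x)\<close> off at \<open>c0\<close> does not change it\<close>
  show "max 0 (r - \<bar>- ln (max (exp (- x)) c0) - x0\<bar>) = max 0 (r - \<bar>x - x0\<bar>)" for x
  proof (cases "exp (- x) \<ge> c0")
    case False
    then have "x > x0 + r"
      by (auto simp: c0_def)
    then show ?thesis
      using False by (auto simp: c0_def max_def)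
  qed (simp add: max_def)
qed

lemma exists_continuous_with_positive_integral:
  fixes w :: "real \<Rightarrow> real"
  assumes "continuous_on {0<..} w" and "x0 > 0" and "w x0 > 0"
    and "integrable lborel (\<lambda>x. indicator {0<..} x * exp (- x) * w x)"
  obtains F where "continuous_on UNIV F"
    and "(\<integral>x. indicator {0<..} x * exp (- x) * w x * F (exp (- x)) \<partial>lborel) > 0"
proof -
  obtain r where "(\<integral>x. indicator {0<..} x * exp (- x) * w x * max 0 (r - \<bar>x - x0\<bar>) \<partial>lborel) > 0"
    using exists_tent_with_positive_integral[OF assms] by blast
  moreover obtain F where "continuous_on UNIV F"
    and F: "\<And>x. x > 0 \<Longrightarrow> F (exp (- x)) = max 0 (r - \<bar>x - x0\<bar>)"
    using continuous_tent_of_exp by blast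
  moreover have "(\<lambda>x. indicator {0<..} x * exp (- x) * w x * F (exp (- x))) =
      (\<lambda>x. indicator {0<..} x * exp (- x) * w x * max 0 (r - \<bar>x - x0\<bar>))"
    by (rule ext) (simp add: F indicator_def)
  ultimately show ?thesis
    using that by metis
qed

lemma laplace_integral_zero_imp_zero:
  fixes w :: "real \<Rightarrow> real"
  assumes "continuous_on {0<..} w"
    and "\<And>s. s > 0 \<Longrightarrow> integrable lborel (\<lambda>x. indicator {0<..} x * exp (- s * x) * w x)"
    and "\<And>s. s > 0 \<Longrightarrow> (\<integral>x. indicator {0<..} x * exp (- s * x) * w x \<partial>lborel) = 0"
    and "x > 0"
  shows "w x = 0"
proof -
  have not_pos: "\<not> v x > 0"
    if v: "continuous_on {0<..} v"
      and int: "\<And>s. s > 0 \<Longrightarrow> integrable lborel (\<lambda>x. indicator {0<..} x * exp (- s * x) * v x)"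
      and zero: "\<And>s. s > 0 \<Longrightarrow> (\<integral>x. indicator {0<..} x * exp (- s * x) * v x \<partial>lborel) = 0"
    for v
  proof
    assume "v x > 0"
    define h where "h y = indicator {0<..} y * exp (- y) * v y" for y
    have h_int: "integrable lborel h"
      using int[of 1] by (simp add: h_def[abs_def])
    have exp_power: "exp (- y) ^ k * exp (- y) = exp (- (real k + 1) * y)" for y k
      by (simp add: exp_of_nat_mult[symmetric] exp_add[symmetric] algebra_simps)
    have "h y * exp (- y) ^ k = indicator {0<..} y * exp (- (real k + 1) * y) * v y" for y k
      unfolding h_def exp_power[symmetric] by (simp only: mult_ac)
    then have moments: "(\<integral>y. h y * exp (- y) ^ k \<partial>lborel) = 0" for k
      using zero[of "real k + 1"] by simp
    obtain F where F: "continuous_on UNIV F" and "(\<integral>y. h y * F (exp (- y)) \<partial>lborel) > 0"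
      using exists_continuous_with_positive_integral[OF v \<open>x > 0\<close> \<open>v x > 0\<close>] h_int
      by (auto simp: h_def[abs_def])
    moreover have "(\<integral>y. h y * F (exp (- y)) \<partial>lborel) = 0"
      by (rule integral_exp_moments_zero_imp_integral_zero[OF h_int _ moments F]) (simp add: h_def)
    ultimately show False
      by simp
  qed
  have "\<not> w x > 0"
    by (rule not_pos) (use assms in auto)
  moreover have "\<not> - w x > 0"
    by (rule not_pos[of "\<lambda>y. - w y"]) (use assms in \<open>auto intro: continuous_intros\<close>)
  ultimately show ?thesis
    by simp
qed

lemma laplace_transform_integrable:
  assumes "continuous_on {0<..} f" and "\<And>x. x > 0 \<Longrightarrow> f x \<ge> 0"
    and "laplace_transform f s < \<infinity>"
  shows "integrable lborel (\<lambda>x. indicator {0<..} x * exp (- s * x) * f x)"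
    and "ennreal (\<integral>x. indicator {0<..} x * exp (- s * x) * f x \<partial>lborel) = laplace_transform f s"
proof -
  have "(\<lambda>x. indicator {0<..} x *\<^sub>R (exp (- s * x) * f x)) \<in> borel_measurable borel"
    by (intro borel_measurable_continuous_on_indicator continuous_intros assms(1)) auto
  then have meas: "(\<lambda>x. indicator {0<..} x * exp (- s * x) * f x) \<in> borel_measurable lborel"
    by (simp add: mult.assoc)
  have nonneg: "AE x in lborel. 0 \<le> indicator {0<..} x * exp (- s * x) * f x"
    using assms(2) by (intro AE_I2) (simp add: indicator_def)
  have lt: "(\<integral>\<^sup>+ x. ennreal (indicator {0<..} x * exp (- s * x) * f x) \<partial>lborel) = laplace_transform f s"
    unfolding laplace_transform_def by (intro nn_integral_cong) (simp add: indicator_def)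
  show int: "integrable lborel (\<lambda>x. indicator {0<..} x * exp (- s * x) * f x)"
    by (rule integrableI_nonneg[OF meas nonneg]) (use assms(3) lt in auto)
  show "ennreal (\<integral>x. indicator {0<..} x * exp (- s * x) * f x \<partial>lborel) = laplace_transform f s"
    using nn_integral_eq_integral[OF int nonneg] lt by simp
qed

lemma laplace_transform_unique:
  fixes f g :: "real \<Rightarrow> real"
  assumes f: "continuous_on {0<..} f" "\<And>x. x > 0 \<Longrightarrow> f x \<ge> 0"
    and g: "continuous_on {0<..} g" "\<And>x. x > 0 \<Longrightarrow> g x \<ge> 0"
    and eq: "\<And>s. s > 0 \<Longrightarrow> laplace_transform f s = laplace_transform g s"
    and finite: "\<And>s. s > 0 \<Longrightarrow> laplace_transform f s < \<infinity>"
    and "x > 0"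
  shows "f x = g x"
proof -
  have "(\<lambda>x. f x - g x) x = 0"
  proof (rule laplace_integral_zero_imp_zero[OF _ _ _ \<open>x > 0\<close>])
    show "continuous_on {0<..} (\<lambda>x. f x - g x)"
      using f g by (intro continuous_intros)
    fix s :: real
    assume "s > 0"
    have finite_g: "laplace_transform g s < \<infinity>"
      using finite[OF \<open>s > 0\<close>] eq[OF \<open>s > 0\<close>] by simp
    note If = laplace_transform_integrable[OF f(1,2) finite[OF \<open>s > 0\<close>]]
    note Ig = laplace_transform_integrable[OF g(1,2) finite_g]
    have diff: "(\<lambda>x. indicator {0<..} x * exp (- s * x) * (f x - g x)) =
        (\<lambda>x. indicator {0<..} x * exp (- s * x) * f x - indicator {0<..} x * exp (- s * x) * g x)"
      by (simp add: fun_eq_iff algebra_simps)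
    show "integrable lborel (\<lambda>x. indicator {0<..} x * exp (- s * x) * (f x - g x))"
      unfolding diff using If(1) Ig(1) by (rule Bochner_Integration.integrable_diff)
    have "(\<integral>x. indicator {0<..} x * exp (- s * x) * f x \<partial>lborel) =
        (\<integral>x. indicator {0<..} x * exp (- s * x) * g x \<partial>lborel)"
    proof (rule ennreal_inj[THEN iffD1])
      show "ennreal (\<integral>x. indicator {0<..} x * exp (- s * x) * f x \<partial>lborel) =
          ennreal (\<integral>x. indicator {0<..} x * exp (- s * x) * g x \<partial>lborel)"
        using If(2) Ig(2) eq[OF \<open>s > 0\<close>] by simp
    qed (use f(2) g(2) in \<open>auto intro!: integral_nonneg_AE simp: indicator_def\<close>)
    then show "(\<integral>x. indicator {0<..} x * exp (- s * x) * (f x - g x) \<partial>lborel) = 0"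
      unfolding diff using If(1) Ig(1) by simp
  qed
  then show ?thesis
    by simp
qed

definition ig_kernel :: "real \<Rightarrow> real \<Rightarrow> real" where
  "ig_kernel lam x = exp (- (lam\<^sup>2 / 2) * x) / sqrt (2 * pi * x)"

definition ig_kernel_integral :: "real \<Rightarrow> real \<Rightarrow> real" where
  "ig_kernel_integral lam x = enn2real (\<integral>\<^sup>+ y. indicator {0<..x} y * ennreal (ig_kernel lam y) \<partial>lborel)"

lemma ig_kernel_measurable [measurable]: "ig_kernel lam \<in> borel_measurable borel"
  unfolding ig_kernel_def by measurable

lemma ig_kernel_nonneg: "x \<ge> 0 \<Longrightarrow> ig_kernel lam x \<ge> 0"
  by (simp add: ig_kernel_def)

lemma ig_kernel_antimono: "0 < y \<Longrightarrow> y \<le> x \<Longrightarrow> ig_kernel lam x \<le> ig_kernel lam y"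
  unfolding ig_kernel_def by (intro frac_le) (auto intro!: mult_left_mono)

lemma continuous_on_ig_kernel: "continuous_on {0<..} (ig_kernel lam)"
  unfolding ig_kernel_def by (intro continuous_intros) auto

lemma laplace_transform_ig_kernel:
  assumes "2 * s + lam\<^sup>2 > 0"
  shows "laplace_transform (ig_kernel lam) s = ennreal (1 / sqrt (2 * s + lam\<^sup>2))"
proof -
  define c where "c = s + lam\<^sup>2 / 2"
  have c: "c > 0"
    using assms by (simp add: c_def)
  have "laplace_transform (ig_kernel lam) s =
      laplace_transform (\<lambda>x. exp (- (lam\<^sup>2 / 2) * x) * (1 / sqrt (2 * pi) * x powr (1 / 2 - 1))) s"
    unfolding laplace_transform_def
  proof (intro nn_integral_cong)
    fix x :: real
    show "indicator {0<..} x * ennreal (exp (- s * x) * ig_kernel lam x) =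
        indicator {0<..} x * ennreal (exp (- s * x) *
          (exp (- (lam\<^sup>2 / 2) * x) * (1 / sqrt (2 * pi) * x powr (1 / 2 - 1))))"
      by (cases "x > 0") (simp_all add: ig_kernel_def powr_minus powr_half_sqrt real_sqrt_mult field_simps)
  qed
  also have "\<dots> = laplace_transform (\<lambda>x. 1 / sqrt (2 * pi) * x powr (1 / 2 - 1)) c"
    unfolding laplace_transform_shift c_def ..
  also have "\<dots> = ennreal (1 / sqrt (2 * pi)) * laplace_transform (\<lambda>x. x powr (1 / 2 - 1)) c"
    by (rule laplace_transform_cmult) auto
  also have "\<dots> = ennreal (1 / sqrt (2 * pi)) * ennreal (Gamma (1 / 2) / c powr (1 / 2))"
    using laplace_transform_powr[OF c, of "1 / 2"] by simp
  also have "\<dots> = ennreal (1 / sqrt (2 * s + lam\<^sup>2))"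
  proof -
    have "sqrt 2 * sqrt c = sqrt (2 * s + lam\<^sup>2)"
      by (simp add: c_def real_sqrt_mult[symmetric] algebra_simps)
    then have "1 / sqrt (2 * pi) * (Gamma (1 / 2) / c powr (1 / 2)) = 1 / sqrt (2 * s + lam\<^sup>2)"
      using c by (simp add: Gamma_one_half_real powr_half_sqrt real_sqrt_mult)
    then show ?thesis
      by (simp add: ennreal_mult[symmetric])
  qed
  finally show ?thesis .
qed

lemma nn_integral_ig_kernel:
  assumes "lam > 0"
  shows "(\<integral>\<^sup>+ y. indicator {0<..} y * ennreal (ig_kernel lam y) \<partial>lborel) = ennreal (1 / lam)"
  using laplace_transform_ig_kernel[of 0 lam] assms by (simp add: laplace_transform_def)

lemma ennreal_ig_kernel_integral:
  assumes "lam > 0"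
  shows "ennreal (ig_kernel_integral lam x) = (\<integral>\<^sup>+ y. indicator {0<..x} y * ennreal (ig_kernel lam y) \<partial>lborel)"
proof -
  have "(\<integral>\<^sup>+ y. indicator {0<..x} y * ennreal (ig_kernel lam y) \<partial>lborel) \<le>
      (\<integral>\<^sup>+ y. indicator {0<..} y * ennreal (ig_kernel lam y) \<partial>lborel)"
    by (intro nn_integral_mono) (simp add: indicator_def)
  also have "\<dots> < \<infinity>"
    using nn_integral_ig_kernel[OF assms] by simp
  finally show ?thesis
    unfolding ig_kernel_integral_def by simp
qed

lemma ig_kernel_integral_measurable [measurable]: "ig_kernel_integral lam \<in> borel_measurable borel"
proof -
  have [measurable]: "Measurable.pred (borel \<Otimes>\<^sub>M borel) (\<lambda>z::real \<times> real. snd z \<in> {0<..fst z})"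
    unfolding greaterThanAtMost_iff by measurable
  have "(\<lambda>x. \<integral>\<^sup>+ y. indicator {0<..x} y * ennreal (ig_kernel lam y) \<partial>lborel) \<in> borel_measurable borel"
    by (rule lborel.borel_measurable_nn_integral) measurable
  then show ?thesis
    unfolding ig_kernel_integral_def[abs_def] by measurable
qed

lemma ig_kernel_integral_nonneg: "ig_kernel_integral lam x \<ge> 0"
  by (simp add: ig_kernel_integral_def)

lemma ig_kernel_integral_le:
  assumes "lam > 0"
  shows "ig_kernel_integral lam x \<le> 1 / lam"
proof -
  have "ennreal (ig_kernel_integral lam x) \<le>
      (\<integral>\<^sup>+ y. indicator {0<..} y * ennreal (ig_kernel lam y) \<partial>lborel)"
    unfolding ennreal_ig_kernel_integral[OF assms] by (intro nn_integral_mono) (simp add: indicator_def)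
  then show ?thesis
    using assms by (simp add: nn_integral_ig_kernel ennreal_le_iff)
qed

lemma ig_kernel_integral_increment:
  assumes "lam > 0" and "0 < a" "a \<le> y" "y \<le> x"
  shows "ig_kernel_integral lam y \<le> ig_kernel_integral lam x"
    and "ig_kernel_integral lam x \<le> ig_kernel_integral lam y + (x - y) * ig_kernel lam a"
proof -
  let ?G = "ig_kernel_integral lam"
  define R where "R = (\<integral>\<^sup>+ t. indicator {y<..x} t * ennreal (ig_kernel lam t) \<partial>lborel)"
  have split: "ennreal (?G x) = ennreal (?G y) + R"
  proof -
    have "ennreal (?G x) = (\<integral>\<^sup>+ t. indicator {0<..y} t * ennreal (ig_kernel lam t) +
        indicator {y<..x} t * ennreal (ig_kernel lam t) \<partial>lborel)"
      unfolding ennreal_ig_kernel_integral[OF assms(1)] using assms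
      by (intro nn_integral_cong) (auto simp: indicator_def)
    also have "\<dots> = ennreal (?G y) + R"
      unfolding ennreal_ig_kernel_integral[OF assms(1)] R_def by (rule nn_integral_add) auto
    finally show ?thesis .
  qed
  have "R \<le> (\<integral>\<^sup>+ t. ennreal (ig_kernel lam a) * indicator {y<..x} t \<partial>lborel)"
    unfolding R_def using assms
    by (intro nn_integral_mono) (auto simp: indicator_def intro!: ennreal_leI ig_kernel_antimono)
  also have "\<dots> = ennreal (ig_kernel lam a) * ennreal (x - y)"
    using assms by (subst nn_integral_cmult_indicator) auto
  also have "\<dots> = ennreal ((x - y) * ig_kernel lam a)"
    using assms ig_kernel_nonneg[of a lam] by (simp add: ennreal_mult[symmetric] mult.commute)
  finally have R_le: "R \<le> ennreal ((x - y) * ig_kernel lam a)" .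
  have "ennreal (?G x) \<le> ennreal (?G y) + ennreal ((x - y) * ig_kernel lam a)"
    unfolding split using R_le by (rule add_left_mono)
  also have "\<dots> = ennreal (?G y + (x - y) * ig_kernel lam a)"
    using assms ig_kernel_nonneg[of a lam] ig_kernel_integral_nonneg
    by (intro ennreal_plus[symmetric]) auto
  finally have "ennreal (?G x) \<le> ennreal (?G y + (x - y) * ig_kernel lam a)" .
  then show "?G x \<le> ?G y + (x - y) * ig_kernel lam a"
    using assms ig_kernel_nonneg[of a lam] ig_kernel_integral_nonneg
    by (subst (asm) ennreal_le_iff) auto
  have "ennreal (?G y) \<le> ennreal (?G x)"
    using split by simp
  then show "?G y \<le> ?G x"
    using ig_kernel_integral_nonneg by (simp add: ennreal_le_iff)
qed

lemma continuous_on_ig_kernel_integral: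
  assumes "lam > 0"
  shows "continuous_on {0<..} (ig_kernel_integral lam)"
proof -
  let ?G = "ig_kernel_integral lam"
  have "isCont ?G x0" if "x0 > 0" for x0
  proof -
    define K where "K = ig_kernel lam (x0 / 2)"
    have "eventually (\<lambda>x. x > x0 / 2) (at x0)"
      using \<open>x0 > 0\<close> by (intro order_tendstoD(1)[OF tendsto_ident_at]) simp
    then have "eventually (\<lambda>x. norm (?G x - ?G x0) \<le> \<bar>x - x0\<bar> * K) (at x0)"
    proof eventually_elim
      case (elim x)
      show ?case
      proof (cases "x \<ge> x0")
        case True
        then show ?thesis
          using ig_kernel_integral_increment[OF assms _ _ True, of "x0 / 2"] \<open>x0 > 0\<close>
          by (simp add: K_def)
      next
        case False
        then show ?thesis
          using ig_kernel_integral_increment[OF assms _ _, of "x0 / 2" x x0] \<open>x0 > 0\<close> elim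
          by (simp add: K_def)
      qed
    qed
    moreover have "((\<lambda>x. \<bar>x - x0\<bar> * K) \<longlongrightarrow> 0) (at x0)"
      using tendsto_mult_left_zero[OF tendsto_rabs_zero[OF LIM_zero[OF tendsto_ident_at]]] by simp
    ultimately have "((\<lambda>x. ?G x - ?G x0) \<longlongrightarrow> 0) (at x0)"
      by (rule Lim_null_comparison)
    then show ?thesis
      unfolding isCont_def by (rule LIM_zero_cancel)
  qed
  then show ?thesis
    by (simp add: continuous_on_eq_continuous_at)
qed

lemma ig_kernel_integral_lower_bound:
  assumes "lam > 0" and "x > 0"
  shows "1 / lam - 1 / (lam\<^sup>2 / 2 * sqrt (2 * pi * x)) \<le> ig_kernel_integral lam x"
proof -
  define a where "a = lam\<^sup>2 / 2"
  have a: "a > 0"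
    using assms by (simp add: a_def)
  have "(\<integral>\<^sup>+ t. indicator {x<..} t * ennreal (ig_kernel lam t) \<partial>lborel) \<le>
      (\<integral>\<^sup>+ t. ennreal (1 / sqrt (2 * pi * x)) * (indicator {0<..} t * ennreal (exp (- a * t) * 1)) \<partial>lborel)"
  proof (intro nn_integral_mono)
    fix t :: real
    have "ig_kernel lam t \<le> 1 / sqrt (2 * pi * x) * exp (- a * t)" if "t > x"
      unfolding ig_kernel_def a_def using that \<open>x > 0\<close> by (simp add: divide_simps mult_left_mono)
    then show "indicator {x<..} t * ennreal (ig_kernel lam t) \<le>
        ennreal (1 / sqrt (2 * pi * x)) * (indicator {0<..} t * ennreal (exp (- a * t) * 1))"
      using \<open>x > 0\<close> by (auto simp: indicator_def ennreal_mult[symmetric] intro!: ennreal_leI)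
  qed
  also have "\<dots> = ennreal (1 / (a * sqrt (2 * pi * x)))"
    using laplace_transform_const_1[OF a] a \<open>x > 0\<close>
    by (subst nn_integral_cmult) (auto simp: laplace_transform_def ennreal_mult[symmetric])
  finally have tail_le: "(\<integral>\<^sup>+ t. indicator {x<..} t * ennreal (ig_kernel lam t) \<partial>lborel) \<le>
      ennreal (1 / (a * sqrt (2 * pi * x)))" .
  have "ennreal (1 / lam) = (\<integral>\<^sup>+ t. indicator {0<..x} t * ennreal (ig_kernel lam t) +
      indicator {x<..} t * ennreal (ig_kernel lam t) \<partial>lborel)"
    unfolding nn_integral_ig_kernel[OF assms(1), symmetric] using \<open>x > 0\<close>
    by (intro nn_integral_cong) (auto simp: indicator_def)
  also have "\<dots> = ennreal (ig_kernel_integral lam x) +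
      (\<integral>\<^sup>+ t. indicator {x<..} t * ennreal (ig_kernel lam t) \<partial>lborel)"
    unfolding ennreal_ig_kernel_integral[OF assms(1)] by (rule nn_integral_add) auto
  also have "\<dots> \<le> ennreal (ig_kernel_integral lam x) + ennreal (1 / (a * sqrt (2 * pi * x)))"
    using tail_le by (rule add_left_mono)
  also have "\<dots> = ennreal (ig_kernel_integral lam x + 1 / (a * sqrt (2 * pi * x)))"
    using a \<open>x > 0\<close> ig_kernel_integral_nonneg by (intro ennreal_plus[symmetric]) auto
  finally show ?thesis
    using a \<open>x > 0\<close> ig_kernel_integral_nonneg by (subst (asm) ennreal_le_iff) (auto simp: a_def)
qed

lemma ig_kernel_integral_tendsto_at_top:
  assumes "lam > 0"
  shows "(ig_kernel_integral lam \<longlongrightarrow> 1 / lam) at_top"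
proof -
  have "eventually (\<lambda>x. 1 / lam - 1 / (lam\<^sup>2 / 2 * sqrt (2 * pi * x)) \<le> ig_kernel_integral lam x) at_top"
    using eventually_gt_at_top[of 0] by eventually_elim (rule ig_kernel_integral_lower_bound[OF assms])
  moreover have "eventually (\<lambda>x. ig_kernel_integral lam x \<le> 1 / lam) at_top"
    using ig_kernel_integral_le[OF assms] by simp
  moreover have "((\<lambda>x. 1 / lam - 1 / (lam\<^sup>2 / 2 * sqrt (2 * pi * x))) \<longlongrightarrow> 1 / lam) at_top"
    using assms by real_asymp
  ultimately show ?thesis
    using tendsto_const by (rule tendsto_sandwich)
qed

lemma laplace_antiderivative:
  fixes f :: "real \<Rightarrow> ennreal"
  assumes [measurable]: "f \<in> borel_measurable borel" and s: "s > 0"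
  shows "(\<integral>\<^sup>+ x. indicator {0<..} x * ennreal (exp (- s * x)) * (\<integral>\<^sup>+ y. indicator {0<..x} y * f y \<partial>lborel) \<partial>lborel)
    = ennreal (1 / s) * (\<integral>\<^sup>+ y. indicator {0<..} y * ennreal (exp (- s * y)) * f y \<partial>lborel)"
proof -
  have [measurable]: "Measurable.pred (borel \<Otimes>\<^sub>M borel) (\<lambda>z::real \<times> real. snd z \<in> {0<..fst z})"
    unfolding greaterThanAtMost_iff by measurable
  have "(\<integral>\<^sup>+ x. indicator {0<..} x * ennreal (exp (- s * x)) * (\<integral>\<^sup>+ y. indicator {0<..x} y * f y \<partial>lborel) \<partial>lborel)
      = (\<integral>\<^sup>+ x. \<integral>\<^sup>+ y. indicator {0<..} x * ennreal (exp (- s * x)) * (indicator {0<..x} y * f y) \<partial>lborel \<partial>lborel)"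
    by (intro nn_integral_cong nn_integral_cmult[symmetric]) measurable
  also have "\<dots> = (\<integral>\<^sup>+ y. \<integral>\<^sup>+ x. indicator {0<..} x * ennreal (exp (- s * x)) * (indicator {0<..x} y * f y) \<partial>lborel \<partial>lborel)"
    by (rule lborel_pair.Fubini'[symmetric]) measurable
  also have "\<dots> = (\<integral>\<^sup>+ y. ennreal (1 / s) * (indicator {0<..} y * ennreal (exp (- s * y)) * f y) \<partial>lborel)"
  proof (intro nn_integral_cong)
    fix y :: real
    show "(\<integral>\<^sup>+ x. indicator {0<..} x * ennreal (exp (- s * x)) * (indicator {0<..x} y * f y) \<partial>lborel) =
        ennreal (1 / s) * (indicator {0<..} y * ennreal (exp (- s * y)) * f y)"
    proof (cases "y > 0")
      case True
      have "(\<integral>\<^sup>+ x. indicator {0<..} x * ennreal (exp (- s * x)) * (indicator {0<..x} y * f y) \<partial>lborel) =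
          (\<integral>\<^sup>+ x. f y * (indicator {y..} x * ennreal (exp (- s * x))) \<partial>lborel)"
        using True by (intro nn_integral_cong) (auto simp: indicator_def mult.commute)
      also have "\<dots> = f y * ennreal (exp (- s * y) / s)"
        using nn_integral_exp_Ici[OF s, of y] by (subst nn_integral_cmult) auto
      also have "\<dots> = ennreal (1 / s) * (indicator {0<..} y * ennreal (exp (- s * y)) * f y)"
        using True s by (simp add: ennreal_mult[symmetric] mult_ac)
      finally show ?thesis .
    qed simp
  qed
  also have "\<dots> = ennreal (1 / s) * (\<integral>\<^sup>+ y. indicator {0<..} y * ennreal (exp (- s * y)) * f y \<partial>lborel)"
    by (rule nn_integral_cmult) measurable
  finally show ?thesis .
qed

lemma laplace_transform_ig_kernel_integral:
  assumes "lam > 0" and "s > 0"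
  shows "laplace_transform (ig_kernel_integral lam) s = ennreal (1 / (s * sqrt (2 * s + lam\<^sup>2)))"
proof -
  have "laplace_transform (ig_kernel_integral lam) s =
      (\<integral>\<^sup>+ x. indicator {0<..} x * ennreal (exp (- s * x)) *
        (\<integral>\<^sup>+ y. indicator {0<..x} y * ennreal (ig_kernel lam y) \<partial>lborel) \<partial>lborel)"
    unfolding laplace_transform_def ennreal_ig_kernel_integral[OF assms(1), symmetric]
    by (simp add: ennreal_mult' mult.assoc)
  also have "\<dots> = ennreal (1 / s) *
      (\<integral>\<^sup>+ y. indicator {0<..} y * ennreal (exp (- s * y)) * ennreal (ig_kernel lam y) \<partial>lborel)"
    by (rule laplace_antiderivative[OF _ assms(2)]) measurable
  also have "\<dots> = ennreal (1 / s) * laplace_transform (ig_kernel lam) s"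
    unfolding laplace_transform_def by (simp add: ennreal_mult' mult.assoc)
  also have "\<dots> = ennreal (1 / (s * sqrt (2 * s + lam\<^sup>2)))"
    using assms by (simp add: laplace_transform_ig_kernel ennreal_mult[symmetric] add_pos_nonneg)
  finally show ?thesis .
qed

definition ig_potential_density :: "real \<Rightarrow> real \<Rightarrow> real \<Rightarrow> real" where
  "ig_potential_density \<delta> lam x = (ig_kernel lam x + lam / 2 + lam\<^sup>2 / 2 * ig_kernel_integral lam x) / \<delta>"

lemma ig_potential_density_nonneg:
  "\<delta> > 0 \<Longrightarrow> lam > 0 \<Longrightarrow> x > 0 \<Longrightarrow> ig_potential_density \<delta> lam x \<ge> 0"
  unfolding ig_potential_density_def using ig_kernel_nonneg[of x lam] ig_kernel_integral_nonneg[of lam x]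
  by simp

lemma continuous_on_ig_potential_density:
  "lam > 0 \<Longrightarrow> continuous_on {0<..} (ig_potential_density \<delta> lam)"
  unfolding ig_potential_density_def[abs_def] divide_inverse[of _ \<delta>]
  by (intro continuous_intros continuous_on_ig_kernel continuous_on_ig_kernel_integral)

lemma laplace_transform_ig_potential_density:
  assumes \<delta>: "\<delta> > 0" and lam: "lam > 0" and s: "s > 0"
  shows "laplace_transform (ig_potential_density \<delta> lam) s = ennreal (1 / ig_exponent \<delta> lam s)"
proof -
  define r where "r = sqrt (2 * s + lam\<^sup>2)"
  have r2: "r\<^sup>2 = 2 * s + lam\<^sup>2"
    unfolding r_def using s by (intro real_sqrt_pow2) auto
  have "r > lam"
    unfolding r_def using s lam by (intro real_less_rsqrt) (auto simp: power2_eq_square)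
  have density_eq: "ig_potential_density \<delta> lam =
      (\<lambda>x. 1 / \<delta> * (ig_kernel lam x + (lam / 2 * 1 + lam\<^sup>2 / 2 * ig_kernel_integral lam x)))"
    using \<delta> by (simp add: fun_eq_iff ig_potential_density_def field_simps)
  have sum_eq: "laplace_transform (\<lambda>x. ig_kernel lam x + (lam / 2 * 1 + lam\<^sup>2 / 2 * ig_kernel_integral lam x)) s
      = laplace_transform (ig_kernel lam) s +
        (laplace_transform (\<lambda>x. lam / 2 * 1) s + laplace_transform (\<lambda>x. lam\<^sup>2 / 2 * ig_kernel_integral lam x) s)"
    using lam ig_kernel_nonneg ig_kernel_integral_nonneg
    by (subst laplace_transform_add; (measurable | simp add: laplace_transform_add)?)+
  have cmult_eq: "laplace_transform (\<lambda>x. lam / 2 * 1) s + laplace_transform (\<lambda>x. lam\<^sup>2 / 2 * ig_kernel_integral lam x) s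
      = ennreal (lam / 2) * laplace_transform (\<lambda>_. 1) s + ennreal (lam\<^sup>2 / 2) * laplace_transform (ig_kernel_integral lam) s"
    using lam by (subst (1 2) laplace_transform_cmult; measurable | simp)
  have "laplace_transform (ig_potential_density \<delta> lam) s = ennreal (1 / \<delta>) *
      laplace_transform (\<lambda>x. ig_kernel lam x + (lam / 2 * 1 + lam\<^sup>2 / 2 * ig_kernel_integral lam x)) s"
    unfolding density_eq by (rule laplace_transform_cmult) ((use \<delta> in simp), measurable)
  also have "\<dots> = ennreal (1 / \<delta>) * (laplace_transform (ig_kernel lam) s +
        (ennreal (lam / 2) * laplace_transform (\<lambda>_. 1) s +
         ennreal (lam\<^sup>2 / 2) * laplace_transform (ig_kernel_integral lam) s))"
    unfolding sum_eq cmult_eq ..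
  also have "\<dots> = ennreal (1 / \<delta>) * ennreal (1 / r + (lam / 2 * (1 / s) + lam\<^sup>2 / 2 * (1 / (s * r))))"
    using lam s \<open>r > lam\<close>
    by (simp add: laplace_transform_ig_kernel laplace_transform_const_1
        laplace_transform_ig_kernel_integral r_def[symmetric] add_pos_nonneg
        ennreal_mult[symmetric] ennreal_plus[symmetric] del: ennreal_plus)
  also have "\<dots> = ennreal (1 / \<delta> * (1 / r + (lam / 2 * (1 / s) + lam\<^sup>2 / 2 * (1 / (s * r)))))"
    using \<delta> lam s \<open>r > lam\<close> by (intro ennreal_mult[symmetric]) auto
  also have "1 / \<delta> * (1 / r + (lam / 2 * (1 / s) + lam\<^sup>2 / 2 * (1 / (s * r)))) = 1 / ig_exponent \<delta> lam s"
  proof -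
    have "r - lam \<noteq> 0" "r \<noteq> 0"
      using \<open>r > lam\<close> lam by auto
    then show ?thesis
      unfolding ig_exponent_def r_def[symmetric] using \<delta> s r2
      by (simp add: field_simps power2_eq_square)
  qed
  finally show ?thesis .
qed

lemma ig_potential_density_asymp_equiv_at_right_0:
  assumes \<delta>: "\<delta> > 0" and lam: "lam > 0"
  shows "ig_potential_density \<delta> lam \<sim>[at_right 0] (\<lambda>x. 1 / (\<delta> * sqrt (2 * pi * x)))"
proof (rule asymp_equivI')
  define B where "B x = (lam / 2 + lam\<^sup>2 / 2 * ig_kernel_integral lam x) * sqrt (2 * pi * x)" for x
  have pos: "eventually (\<lambda>x::real. x > 0) (at_right 0)"
    by (simp add: eventually_at_right_less)
  have "eventually (\<lambda>x. norm (B x) \<le> lam * sqrt (2 * pi * x)) (at_right 0)"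
    using pos
  proof eventually_elim
    case (elim x)
    have "lam\<^sup>2 / 2 * ig_kernel_integral lam x \<le> lam\<^sup>2 / 2 * (1 / lam)"
      using ig_kernel_integral_le[OF lam, of x] by (intro mult_left_mono) auto
    also have "\<dots> = lam / 2"
      using lam by (simp add: power2_eq_square)
    finally have "\<bar>lam / 2 + lam\<^sup>2 / 2 * ig_kernel_integral lam x\<bar> \<le> lam"
      using lam ig_kernel_integral_nonneg[of lam x] by simp
    then show ?case
      unfolding B_def using elim by (simp add: abs_mult mult_right_mono)
  qed
  moreover have "((\<lambda>x::real. lam * sqrt (2 * pi * x)) \<longlongrightarrow> 0) (at_right 0)"
    by real_asymp
  ultimately have "(B \<longlongrightarrow> 0) (at_right 0)"
    by (rule Lim_null_comparison)
  moreover have "((\<lambda>x::real. exp (- (lam\<^sup>2 / 2) * x)) \<longlongrightarrow> 1) (at_right 0)"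
    by real_asymp
  ultimately have "((\<lambda>x. exp (- (lam\<^sup>2 / 2) * x) + B x) \<longlongrightarrow> 1) (at_right 0)"
    using tendsto_add[of _ 1 _ B 0] by simp
  moreover have "eventually (\<lambda>x. exp (- (lam\<^sup>2 / 2) * x) + B x =
      ig_potential_density \<delta> lam x / (1 / (\<delta> * sqrt (2 * pi * x)))) (at_right 0)"
    using pos by eventually_elim (use \<delta> in \<open>simp add: B_def ig_potential_density_def ig_kernel_def field_simps\<close>)
  ultimately show "((\<lambda>x. ig_potential_density \<delta> lam x / (1 / (\<delta> * sqrt (2 * pi * x)))) \<longlongrightarrow> 1) (at_right 0)"
    by (rule Lim_transform_eventually)
qed

lemma ig_potential_density_tendsto_at_top:
  assumes \<delta>: "\<delta> > 0" and lam: "lam > 0"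
  shows "(ig_potential_density \<delta> lam \<longlongrightarrow> lam / \<delta>) at_top"
proof -
  have "(ig_kernel lam \<longlongrightarrow> 0) at_top"
    unfolding ig_kernel_def[abs_def] using lam by real_asymp
  then have "((\<lambda>x. (ig_kernel lam x + lam / 2 + lam\<^sup>2 / 2 * ig_kernel_integral lam x) / \<delta>) \<longlongrightarrow>
      (0 + lam / 2 + lam\<^sup>2 / 2 * (1 / lam)) / \<delta>) at_top"
    by (intro tendsto_intros ig_kernel_integral_tendsto_at_top lam) (use \<delta> in auto)
  also have "(0 + lam / 2 + lam\<^sup>2 / 2 * (1 / lam)) / \<delta> = lam / \<delta>"
    using lam by (simp add: power2_eq_square field_simps)
  finally show ?thesis
    unfolding ig_potential_density_def[abs_def] .
qed

lemma ig_exponent_pos: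
  assumes "\<delta> > 0" and "s > 0"
  shows "ig_exponent \<delta> lam s > 0"
proof -
  have "lam < sqrt (2 * s + lam\<^sup>2)"
    by (rule real_less_rsqrt) (use assms in simp)
  then show ?thesis
    unfolding ig_exponent_def using assms by simp
qed

lemma ig_exponent_at_top:
  assumes "\<delta> > 0"
  shows "filterlim (ig_exponent \<delta> lam) at_top at_top"
  unfolding ig_exponent_def[abs_def] using assms by real_asymp

lemma (in prob_space) AE_pos_if_laplace_tendsto_0:
  fixes X :: "'a \<Rightarrow> real"
  assumes [measurable]: "X \<in> borel_measurable M"
    and nonneg: "\<And>\<omega>. \<omega> \<in> space M \<Longrightarrow> X \<omega> \<ge> 0"
    and lim: "((\<lambda>s. expectation (\<lambda>\<omega>. exp (- s * X \<omega>))) \<longlongrightarrow> 0) at_top"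
  shows "AE \<omega> in M. X \<omega> > 0"
proof -
  define Z where "Z = X -` {..0} \<inter> space M"
  have [measurable]: "Z \<in> sets M"
    unfolding Z_def using assms(1) by (rule measurable_sets) (rule atMost_borel)
  have prob_le: "prob Z \<le> expectation (\<lambda>\<omega>. exp (- s * X \<omega>))" if "s \<ge> 0" for s
  proof -
    have "prob Z = expectation (indicator Z)"
      by (simp add: Z_def Int_absorb2)
    also have "\<dots> \<le> expectation (\<lambda>\<omega>. exp (- s * X \<omega>))"
    proof (rule integral_mono)
      show "integrable M (indicator Z :: 'a \<Rightarrow> real)"
        by (rule integrable_real_indicator) (auto simp: emeasure_eq_measure)
      show "integrable M (\<lambda>\<omega>. exp (- s * X \<omega>))"
        by (rule integrable_const_bound[where B = 1])
           (use nonneg \<open>s \<ge> 0\<close> in \<open>auto intro!: AE_I2 simp: mult_nonneg_nonneg\<close>)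
      show "indicator Z \<omega> \<le> exp (- s * X \<omega>)" for \<omega>
        using nonneg[of \<omega>] by (auto simp: Z_def indicator_def)
    qed
    finally show ?thesis .
  qed
  have "eventually (\<lambda>s. prob Z \<le> expectation (\<lambda>\<omega>. exp (- s * X \<omega>))) at_top"
    using eventually_ge_at_top[of 0] by eventually_elim (rule prob_le)
  with lim have "prob Z \<le> 0"
    by (rule tendsto_le[OF trivial_limit_at_top_linorder _ tendsto_const])
  then have "Z \<in> null_sets M"
    by (simp add: null_sets_def emeasure_eq_measure measure_le_0_iff)
  then show ?thesis
    by (rule AE_I') (auto simp: Z_def)
qed

lemma (in prob_space) nn_integral_exp_on_pos_eq_expectation:
  fixes X :: "'a \<Rightarrow> real"
  assumes [measurable]: "X \<in> borel_measurable M"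
    and nonneg: "\<And>\<omega>. \<omega> \<in> space M \<Longrightarrow> X \<omega> \<ge> 0"
    and lim: "((\<lambda>s. expectation (\<lambda>\<omega>. exp (- s * X \<omega>))) \<longlongrightarrow> 0) at_top"
    and "s \<ge> 0"
  shows "(\<integral>\<^sup>+ \<omega>. indicator {0<..} (X \<omega>) * ennreal (exp (- s * X \<omega>)) \<partial>M) =
    ennreal (expectation (\<lambda>\<omega>. exp (- s * X \<omega>)))"
proof -
  have "AE \<omega> in M. X \<omega> > 0"
    using nonneg lim by (rule AE_pos_if_laplace_tendsto_0[OF assms(1)])
  then have "(\<integral>\<^sup>+ \<omega>. indicator {0<..} (X \<omega>) * ennreal (exp (- s * X \<omega>)) \<partial>M) =
      (\<integral>\<^sup>+ \<omega>. ennreal (exp (- s * X \<omega>)) \<partial>M)"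
    by (intro nn_integral_cong_AE) (auto elim!: eventually_mono)
  also have "\<dots> = ennreal (expectation (\<lambda>\<omega>. exp (- s * X \<omega>)))"
  proof (rule nn_integral_eq_integral)
    show "integrable M (\<lambda>\<omega>. exp (- s * X \<omega>))"
      by (rule integrable_const_bound[where B = 1])
         (use nonneg \<open>s \<ge> 0\<close> in \<open>auto intro!: AE_I2 simp: mult_nonneg_nonneg\<close>)
  qed simp
  finally show ?thesis .
qed

definition occupation_measure :: "'a measure \<Rightarrow> (real \<Rightarrow> 'a \<Rightarrow> real) \<Rightarrow> real measure" where
  "occupation_measure M S =
    distr (density (lborel \<Otimes>\<^sub>M M) (\<lambda>z. indicator {0..} (fst z))) borel (\<lambda>z. S (fst z) (snd z))"

lemma sets_occupation_measure [simp, measurable_cong]: "sets (occupation_measure M S) = sets borel"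
  by (simp add: occupation_measure_def)

lemma nn_integral_occupation_measure:
  assumes "sigma_finite_measure M"
    and S_meas: "(\<lambda>(t, \<omega>). S t \<omega>) \<in> borel_measurable (lborel \<Otimes>\<^sub>M M)"
    and [measurable]: "g \<in> borel_measurable borel"
  shows "(\<integral>\<^sup>+ x. g x \<partial>occupation_measure M S) =
    (\<integral>\<^sup>+ \<omega>. \<integral>\<^sup>+ t. indicator {0..} t * g (S t \<omega>) \<partial>lborel \<partial>M)"
proof -
  interpret M: sigma_finite_measure M
    by fact
  interpret P: pair_sigma_finite lborel M
    by unfold_locales
  have [measurable]: "(\<lambda>z. S (fst z) (snd z)) \<in> borel_measurable (lborel \<Otimes>\<^sub>M M)"
    using S_meas by (simp add: case_prod_beta')
  have "(\<integral>\<^sup>+ x. g x \<partial>occupation_measure M S) =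
      (\<integral>\<^sup>+ z. indicator {0..} (fst z) * g (S (fst z) (snd z)) \<partial>(lborel \<Otimes>\<^sub>M M))"
    unfolding occupation_measure_def by (subst nn_integral_distr) (auto intro: nn_integral_density)
  also have "\<dots> = (\<integral>\<^sup>+ \<omega>. \<integral>\<^sup>+ t. indicator {0..} t * g (S t \<omega>) \<partial>lborel \<partial>M)"
    by (rule P.nn_integral_snd[symmetric, where f = "\<lambda>z. indicator {0..} (fst z) * g (S (fst z) (snd z))",
          simplified]) measurable
  finally show ?thesis .
qed

lemma potential_measure_eq_occupation_measure:
  assumes "sigma_finite_measure M" and "(\<lambda>(t, \<omega>). S t \<omega>) \<in> borel_measurable (lborel \<Otimes>\<^sub>M M)"
    and [measurable]: "A \<in> sets borel"
  shows "potential_measure M S A = emeasure (occupation_measure M S) A"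
  using nn_integral_occupation_measure[OF assms(1,2), of "indicator A"]
  unfolding potential_measure_def by (simp add: mult.commute)

lemma nn_integral_potential_density:
  fixes M :: "'a measure" and S :: "real \<Rightarrow> 'a \<Rightarrow> real" and u :: "real \<Rightarrow> real"
    and f :: "real \<Rightarrow> ennreal"
  assumes "sigma_finite_measure M"
    and "(\<lambda>(t, \<omega>). S t \<omega>) \<in> borel_measurable (lborel \<Otimes>\<^sub>M M)"
    and [measurable]: "(\<lambda>x. indicator {0<..} x * u x) \<in> borel_measurable borel"
    and u_density: "\<And>A. A \<in> sets borel \<Longrightarrow> A \<subseteq> {0<..} \<Longrightarrow>
        potential_measure M S A = (\<integral>\<^sup>+ x\<in>A. ennreal (u x) \<partial>lborel)"
    and [measurable]: "f \<in> borel_measurable borel"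
  shows "(\<integral>\<^sup>+ x. indicator {0<..} x * ennreal (u x) * f x \<partial>lborel) =
    (\<integral>\<^sup>+ x. indicator {0<..} x * f x \<partial>occupation_measure M S)"
proof -
  let ?\<nu> = "occupation_measure M S" and ?\<mu> = "density lborel (\<lambda>x. ennreal (indicator {0<..} x * u x))"
  have \<nu>_eq_\<mu>: "density ?\<nu> (indicator {0<..}) = ?\<mu>"
  proof (rule measure_eqI)
    fix A
    assume "A \<in> sets (density ?\<nu> (indicator {0<..}))"
    then have [measurable]: "A \<in> sets borel"
      by simp
    have "emeasure (density ?\<nu> (indicator {0<..})) A = (\<integral>\<^sup>+ x. indicator {0<..} x * indicator A x \<partial>?\<nu>)"
      by (rule emeasure_density) auto
    also have "\<dots> = (\<integral>\<^sup>+ x. indicator (A \<inter> {0<..}) x \<partial>?\<nu>)"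
      by (intro nn_integral_cong) (simp split: split_indicator)
    also have "\<dots> = emeasure ?\<nu> (A \<inter> {0<..})"
      by (rule nn_integral_indicator) measurable
    also have "\<dots> = (\<integral>\<^sup>+ x\<in>A \<inter> {0<..}. ennreal (u x) \<partial>lborel)"
      using assms(1,2) by (subst potential_measure_eq_occupation_measure[symmetric]) (auto intro: u_density)
    also have "\<dots> = emeasure ?\<mu> A"
      by (subst emeasure_density) (auto intro!: nn_integral_cong split: split_indicator)
    finally show "emeasure (density ?\<nu> (indicator {0<..})) A = emeasure ?\<mu> A" .
  qed simp
  have "(\<integral>\<^sup>+ x. indicator {0<..} x * ennreal (u x) * f x \<partial>lborel) = (\<integral>\<^sup>+ x. f x \<partial>?\<mu>)"
    by (subst nn_integral_density) (auto intro!: nn_integral_cong split: split_indicator)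
  also have "\<dots> = (\<integral>\<^sup>+ x. indicator {0<..} x * f x \<partial>?\<nu>)"
    unfolding \<nu>_eq_\<mu>[symmetric] by (rule nn_integral_density) auto
  finally show ?thesis .
qed

lemma laplace_transform_potential_density:
  fixes M :: "'a measure" and S :: "real \<Rightarrow> 'a \<Rightarrow> real"
    and u \<phi> :: "real \<Rightarrow> real"
  assumes "prob_space M"
    and S_meas: "(\<lambda>(t, \<omega>). S t \<omega>) \<in> borel_measurable (lborel \<Otimes>\<^sub>M M)"
    and S_nonneg: "\<And>t \<omega>. t \<ge> 0 \<Longrightarrow> \<omega> \<in> space M \<Longrightarrow> S t \<omega> \<ge> 0"
    and S_laplace: "\<And>t s. t \<ge> 0 \<Longrightarrow> s \<ge> 0 \<Longrightarrow>
        (\<integral>\<omega>. exp (- s * S t \<omega>) \<partial>M) = exp (- t * \<phi> s)"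
    and \<phi>_pos: "\<And>s. s > 0 \<Longrightarrow> \<phi> s > 0" and \<phi>_at_top: "filterlim \<phi> at_top at_top"
    and u_meas: "(\<lambda>x. indicator {0<..} x * u x) \<in> borel_measurable borel"
    and u_density: "\<And>A. A \<in> sets borel \<Longrightarrow> A \<subseteq> {0<..} \<Longrightarrow>
        potential_measure M S A = (\<integral>\<^sup>+ x\<in>A. ennreal (u x) \<partial>lborel)"
    and s: "s > 0"
  shows "laplace_transform u s = ennreal (1 / \<phi> s)"
proof -
  interpret prob_space M
    by fact
  interpret P: pair_sigma_finite lborel M
    by unfold_locales
  have S_prod [measurable]: "(\<lambda>z. S (fst z) (snd z)) \<in> borel_measurable (lborel \<Otimes>\<^sub>M M)"
    using S_meas by (simp add: case_prod_beta')
  have [measurable]: "S t \<in> borel_measurable M" for t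
    using measurable_compose_Pair1[of t lborel, OF _ S_prod] by simp
  have inner: "(\<integral>\<^sup>+ \<omega>. indicator {0..} t * (indicator {0<..} (S t \<omega>) * ennreal (exp (- s * S t \<omega>))) \<partial>M)
      = indicator {0<..} t * ennreal (exp (- \<phi> s * t))" if "t \<noteq> 0" for t
  proof (cases "t > 0")
    case True
    have "filterlim (\<lambda>s. - t * \<phi> s) at_bot at_top"
      unfolding filterlim_uminus_at_bot using True
      by (simp add: filterlim_tendsto_pos_mult_at_top[OF tendsto_const _ \<phi>_at_top])
    then have "((\<lambda>s. exp (- t * \<phi> s)) \<longlongrightarrow> 0) at_top"
      by (rule filterlim_compose[OF exp_at_bot])
    moreover have "eventually (\<lambda>s. exp (- t * \<phi> s) = expectation (\<lambda>\<omega>. exp (- s * S t \<omega>))) at_top"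
      using eventually_ge_at_top[of 0] by eventually_elim (use S_laplace True in simp)
    ultimately have "((\<lambda>s. expectation (\<lambda>\<omega>. exp (- s * S t \<omega>))) \<longlongrightarrow> 0) at_top"
      by (rule Lim_transform_eventually)
    then show ?thesis
      using nn_integral_exp_on_pos_eq_expectation[of "S t" s] S_nonneg S_laplace True s
      by (simp add: nn_integral_cmult mult.commute)
  qed (use that in simp)
  have "laplace_transform u s =
      (\<integral>\<^sup>+ x. indicator {0<..} x * ennreal (u x) * ennreal (exp (- s * x)) \<partial>lborel)"
    unfolding laplace_transform_def by (intro nn_integral_cong) (simp add: ennreal_mult' ennreal_mult'' mult_ac)
  also have "\<dots> = (\<integral>\<^sup>+ \<omega>. \<integral>\<^sup>+ t. indicator {0..} t *
      (indicator {0<..} (S t \<omega>) * ennreal (exp (- s * S t \<omega>))) \<partial>lborel \<partial>M)"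
    using sigma_finite_measure_axioms S_meas
    by (simp add: nn_integral_potential_density[OF _ _ u_meas u_density] nn_integral_occupation_measure)
  also have "\<dots> = (\<integral>\<^sup>+ t. \<integral>\<^sup>+ \<omega>. indicator {0..} t *
      (indicator {0<..} (S t \<omega>) * ennreal (exp (- s * S t \<omega>))) \<partial>M \<partial>lborel)"
    by (rule P.Fubini') measurable
  also have "\<dots> = (\<integral>\<^sup>+ t. indicator {0<..} t * ennreal (exp (- \<phi> s * t)) \<partial>lborel)"
    using AE_lborel_singleton[of 0] by (rule nn_integral_cong_AE[OF eventually_mono]) (rule inner)
  also have "\<dots> = ennreal (1 / \<phi> s)"
    using laplace_transform_const_1[OF \<phi>_pos[OF s]] by (simp add: laplace_transform_def)
  finally show ?thesis .
qed

theorem mainTheorem5: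
  fixes M :: "'a measure" and S :: "real \<Rightarrow> 'a \<Rightarrow> real"
    and u :: "real \<Rightarrow> real" and \<delta> lam :: real
  assumes delta_pos: "\<delta> > 0" and lam_pos: "lam > 0"
    and prob: "prob_space M"
    and S_meas: "(\<lambda>(t, \<omega>). S t \<omega>) \<in> borel_measurable (lborel \<Otimes>\<^sub>M M)"
    and S_nonneg: "\<And>t \<omega>. t \<ge> 0 \<Longrightarrow> \<omega> \<in> space M \<Longrightarrow> S t \<omega> \<ge> 0"
    and S_laplace: "\<And>t s. t \<ge> 0 \<Longrightarrow> s \<ge> 0 \<Longrightarrow>
        (\<integral>\<omega>. exp (- s * S t \<omega>) \<partial>M) = exp (- t * ig_exponent \<delta> lam s)"
    and u_cont: "continuous_on {0<..} u"
    and u_nonneg: "\<And>x. x > 0 \<Longrightarrow> u x \<ge> 0"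
    and u_density: "\<And>A. A \<in> sets borel \<Longrightarrow> A \<subseteq> {0<..} \<Longrightarrow>
        potential_measure M S A = (\<integral>\<^sup>+ x\<in>A. ennreal (u x) \<partial>lborel)"
  shows "u \<sim>[at_right 0] (\<lambda>x. 1 / (\<delta> * sqrt (2 * pi * x))) \<and>
         u \<sim>[at_top] (\<lambda>x. lam / \<delta>)"
proof -
  let ?v = "ig_potential_density \<delta> lam"
  have u_meas: "(\<lambda>x. indicator {0<..} x * u x) \<in> borel_measurable borel"
    using borel_measurable_continuous_on_indicator[OF _ u_cont] by simp
  have laplace_u: "laplace_transform u s = ennreal (1 / ig_exponent \<delta> lam s)" if "s > 0" for s
    using prob S_meas S_nonneg S_laplace ig_exponent_pos[OF delta_pos] ig_exponent_at_top[OF delta_pos]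
      u_meas u_density that
    by (rule laplace_transform_potential_density)
  have u_eq: "?v x = u x" if "x > 0" for x
    using u_cont u_nonneg continuous_on_ig_potential_density[OF lam_pos]
      ig_potential_density_nonneg[OF delta_pos lam_pos]
      laplace_u laplace_transform_ig_potential_density[OF delta_pos lam_pos] that
    by (intro laplace_transform_unique[symmetric]) auto
  have "eventually (\<lambda>x. ?v x = u x) (at_right 0)"
    using eventually_at_right_less[of 0] by eventually_elim (rule u_eq)
  moreover have "eventually (\<lambda>x. ?v x = u x) at_top"
    using eventually_gt_at_top[of 0] by eventually_elim (rule u_eq)
  ultimately show ?thesis
    using ig_potential_density_asymp_equiv_at_right_0[OF delta_pos lam_pos]
      tendsto_imp_asymp_equiv_const[OF ig_potential_density_tendsto_at_top[OF delta_pos lam_pos]]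
      delta_pos lam_pos
    by (auto elim!: asymp_equiv_transfer)
qed

end
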